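(* Let $H_1,H_2\in\mathcal O$, let $\lambda_1,\dots,\lambda_N$ be the eigenvalues of $H_2$ with orthonormal eigenvectors $\psi_1,\dots,\psi_N$, and assume (i) $(H_1\psi_k,\psi_j)\ne0$ for all $k\ne j$ and (ii) $\lambda_k-\lambda_l\ne\lambda_{k'}-\lambda_{l'}$ for all ordered pairs $(k,l)\ne(k',l')$. Then $E_{k,j}\in\mathcal L(H_1,H_2)$ for all $k\neq j\in\{1,\dots,N\}$.
   Context: $\mathcal H=\mathbb C^N$, $N>1$; $\mathcal O$ is the real vector space of Hermitian operators with bracket $\{A,B\}=i(AB-BA)$; $\mathcal L(H_1,H_2)$ is the real linear span of $H_1,H_2$ and all iterated brackets of them. $E_{k,j}$ is the Hermitian operator with $(E_{k,j}\psi_{k'},\psi_{j'})=1$ if $k'=j'=k$, $=-1$ if $k'=j'=j$, and $=0$ otherwise (i.e. diagonal in the basis $\psi_1,\dots,\psi_N$ with entry $1$ at $k$, $-1$ at $j$). *)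

theory Defs
  imports "HOL-Analysis.Analysis"
begin

text \<open>Operators on C^N are complex N x N matrices, indexed by a finite type 'n with CARD('n) = N.\<close>

type_synonym 'n cmat = "complex ^ 'n ^ 'n"

definition hermitian :: "'n::finite cmat \<Rightarrow> bool" where
  "hermitian A \<longleftrightarrow> (\<forall>i j. A $ i $ j = cnj (A $ j $ i))"

definition cinner :: "complex ^ 'n::finite \<Rightarrow> complex ^ 'n \<Rightarrow> complex" where
  "cinner u v = (\<Sum>i\<in>UNIV. u $ i * cnj (v $ i))"

definition qbracket :: "'n::finite cmat \<Rightarrow> 'n cmat \<Rightarrow> 'n cmat" where
  "qbracket A B = (\<chi> a b. \<i> * ((A ** B - B ** A) $ a $ b))"

inductive_set iter_brackets :: "'n::finite cmat \<Rightarrow> 'n cmat \<Rightarrow> 'n cmat set"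
  for H1 H2 :: "'n cmat" where
  gen1: "H1 \<in> iter_brackets H1 H2"
| gen2: "H2 \<in> iter_brackets H1 H2"
| brk: "A \<in> iter_brackets H1 H2 \<Longrightarrow> B \<in> iter_brackets H1 H2 \<Longrightarrow> qbracket A B \<in> iter_brackets H1 H2"

text \<open>L(H1,H2): the real linear span (span over the reals, via scaleR).\<close>
definition lie_gen :: "'n::finite cmat \<Rightarrow> 'n cmat \<Rightarrow> 'n cmat set" where
  "lie_gen H1 H2 = span (iter_brackets H1 H2)"

text \<open>E_{k,j} w.r.t. the orthonormal basis psi: the operator
  |psi_k><psi_k| - |psi_j><psi_j|, i.e. diagonal in the basis psi with entry 1 at k, -1 at j.\<close>
definition Ekj :: "('n::finite \<Rightarrow> complex ^ 'n) \<Rightarrow> 'n \<Rightarrow> 'n \<Rightarrow> 'n cmat" where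
  "Ekj psi k j = (\<chi> a b. psi k $ a * cnj (psi k $ b) - psi j $ a * cnj (psi j $ b))"

end

theory Submission
  imports Defs
begin

text \<open>In the eigenbasis of \<open>H\<^sub>2\<close> the second generator is \<open>diag \<lambda>\<close>, and bracketing with it
  multiplies the \<open>(a,b)\<close> entry of a matrix by \<open>i(\<lambda>\<^sub>b - \<lambda>\<^sub>a)\<close>. Because the gaps are pairwise
  distinct, their squares single out the positions \<open>(a,b), (b,a)\<close> among all others (the diagonal,
  with gap \<open>0\<close>, included), so a real polynomial in the square of this operation projects \<open>H\<^sub>1\<close> onto
  its \<open>(a,b), (b,a)\<close> entries, which are nonzero by the coupling hypothesis. Applying the operation once
  more turns this Hermitian pair into the one with the phase of its entries rotated by \<open>i\<close>, and the
  bracket of the two pairs is a positive multiple of \<open>E\<^sub>a\<^sub>,\<^sub>b\<close>. Conjugating by the unitary whose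
  columns are the \<open>\<psi>\<^sub>k\<close> transports everything back.\<close>

lemma linear_qbracket_left: "linear (\<lambda>A. qbracket A B)"
  by (rule linearI)
     (simp_all add: qbracket_def vec_eq_iff matrix_matrix_mult_def sum.distrib
       sum_distrib_left scaleR_conv_of_real[where 'a=complex] algebra_simps)

lemma linear_qbracket_right: "linear (qbracket A)"
  by (rule linearI)
     (simp_all add: qbracket_def vec_eq_iff matrix_matrix_mult_def sum.distrib
       sum_distrib_left scaleR_conv_of_real[where 'a=complex] algebra_simps)

lemma qbracket_mem_lie_gen:
  assumes "A \<in> lie_gen H1 H2" "B \<in> lie_gen H1 H2"
  shows "qbracket A B \<in> lie_gen H1 H2"
proof -
  have right: "qbracket a ` lie_gen H1 H2 \<subseteq> lie_gen H1 H2" if "a \<in> iter_brackets H1 H2" for a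
    unfolding lie_gen_def span_linear_image[OF linear_qbracket_right, symmetric]
    using that by (intro span_mono) (auto intro: iter_brackets.brk)
  have "(\<lambda>A. qbracket A B) ` lie_gen H1 H2 \<subseteq> lie_gen H1 H2"
    unfolding lie_gen_def span_linear_image[OF linear_qbracket_left, symmetric]
    using right assms(2) by (intro span_minimal) (auto simp: lie_gen_def)
  then show ?thesis using assms(1) by blast
qed

lemma lie_gen_hom_image:
  assumes "linear f" and "\<And>X Y. f (qbracket X Y) = qbracket (f X) (f Y)"
  shows "f ` lie_gen K D \<subseteq> lie_gen (f K) (f D)"
proof -
  have "f X \<in> iter_brackets (f K) (f D)" if "X \<in> iter_brackets K D" for X
    using that by induction (auto simp: assms(2) intro: iter_brackets.intros)
  then show ?thesis
    unfolding lie_gen_def span_linear_image[OF assms(1), symmetric] by (intro span_mono) auto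
qed

lemma qbracket_eq_mat_mult: "qbracket A B = mat \<i> ** (A ** B - B ** A)"
  by (simp add: qbracket_def vec_eq_iff matrix_matrix_mult_def mat_def if_distrib if_distribR
      sum.delta cong: if_cong)

lemma mat_mult_commute: "mat c ** A = A ** (mat c :: 'a::comm_semiring_1^'n::finite^'n)"
  by (simp add: vec_eq_iff matrix_matrix_mult_def mat_def if_distrib if_distribR
      sum.delta' mult.commute cong: if_cong)

lemma linear_sandwich:
  fixes U :: "complex^'m::finite^'p" and V :: "complex^'q^'n::finite"
  shows "linear (\<lambda>X. U ** X ** V)"
  by (rule linearI)
     (simp_all add: vec_eq_iff matrix_matrix_mult_def sum.distrib sum_distrib_left
       sum_distrib_right scaleR_conv_of_real[where 'a=complex] algebra_simps)

lemma qbracket_conj: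
  assumes "V ** U = mat 1"
  shows "U ** qbracket X Y ** V = qbracket (U ** X ** V) (U ** Y ** V)"
proof -
  have prod: "(U ** A ** V) ** (U ** B ** V) = U ** (A ** B) ** V" for A B
    by (metis assms matrix_mul_assoc matrix_mul_rid)
  have "U ** qbracket X Y ** V = mat \<i> ** (U ** (X ** Y - Y ** X) ** V)"
    by (metis qbracket_eq_mat_mult mat_mult_commute matrix_mul_assoc)
  also have "\<dots> = mat \<i> ** (U ** (X ** Y) ** V - U ** (Y ** X) ** V)"
    using linear_diff[OF linear_sandwich[of U V]] by simp
  finally show ?thesis
    by (simp add: qbracket_eq_mat_mult prod)
qed

definition entrywise :: "('n::finite \<Rightarrow> 'n \<Rightarrow> complex) \<Rightarrow> 'n cmat \<Rightarrow> 'n cmat" where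
  "entrywise f X = (\<chi> a b. f a b * X $ a $ b)"

definition real_diag :: "('n::finite \<Rightarrow> real) \<Rightarrow> 'n cmat" where
  "real_diag lam = (\<chi> a b. if a = b then complex_of_real (lam a) else 0)"

lemma qbracket_real_diag:
  "qbracket X (real_diag lam) = entrywise (\<lambda>a b. \<i> * complex_of_real (lam b - lam a)) X"
  by (simp add: real_diag_def entrywise_def qbracket_def vec_eq_iff matrix_matrix_mult_def
      if_distrib[of "\<lambda>x. x * _"] if_distrib[of "\<lambda>x. _ * x"] algebra_simps cong: if_cong)

lemma entrywise_prod_mem:
  assumes W: "subspace W"
    and closed: "\<And>X. X \<in> W \<Longrightarrow> entrywise (\<lambda>a b. \<i> * complex_of_real (w a b)) X \<in> W"
    and "finite F" "X \<in> W"
  shows "entrywise (\<lambda>a b. complex_of_real (\<Prod>p\<in>F. c p - (w a b)\<^sup>2)) X \<in> W"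
  using \<open>finite F\<close>
proof (induction F rule: finite_induct)
  case empty
  then show ?case using \<open>X \<in> W\<close> by (simp add: entrywise_def vec_eq_iff)
next
  case (insert p F)
  define Y where "Y = entrywise (\<lambda>a b. complex_of_real (\<Prod>p\<in>F. c p - (w a b)\<^sup>2)) X"
  let ?ad = "entrywise (\<lambda>a b. \<i> * complex_of_real (w a b))"
  have "?ad (?ad Y) + c p *\<^sub>R Y \<in> W"
    using insert.IH closed W unfolding Y_def by (intro subspace_add subspace_scale) auto
  moreover have "?ad (?ad Y) + c p *\<^sub>R Y
      = entrywise (\<lambda>a b. complex_of_real (\<Prod>p\<in>insert p F. c p - (w a b)\<^sup>2)) X"
    using insert.hyps
    by (simp add: Y_def entrywise_def vec_eq_iff scaleR_conv_of_real[where 'a=complex]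
        algebra_simps power2_eq_square)
  ultimately show ?case by simp
qed

lemma entrywise_restrict_pair_mem:
  assumes W: "subspace W"
    and closed: "\<And>X. X \<in> W \<Longrightarrow> entrywise (\<lambda>a b. \<i> * complex_of_real (w a b)) X \<in> W"
    and X: "X \<in> W"
    and sym: "(w b a)\<^sup>2 = (w a b)\<^sup>2"
    and sep: "\<And>x y. (x, y) \<notin> {(a, b), (b, a)} \<Longrightarrow> (w x y)\<^sup>2 \<noteq> (w a b)\<^sup>2"
  shows "entrywise (\<lambda>x y. if (x, y) \<in> {(a, b), (b, a)} then 1 else 0) X \<in> W"
proof -
  define F where "F = - {(a, b), (b, a)}"
  define C where "C = (\<Prod>p\<in>F. (w (fst p) (snd p))\<^sup>2 - (w a b)\<^sup>2)"
  \<comment> \<open>At \<open>(a,b)\<close> and \<open>(b,a)\<close> the product below equals \<open>C\<close>; at any other \<open>(x,y)\<close> its factor \<open>p = (x,y)\<close> vanishes.\<close>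
  have "C \<noteq> 0"
    unfolding C_def F_def using sep by (subst prod_zero_iff) (auto simp: split_paired_all)
  have "entrywise (\<lambda>x y. complex_of_real (\<Prod>p\<in>F. (w (fst p) (snd p))\<^sup>2 - (w x y)\<^sup>2)) X \<in> W"
    by (rule entrywise_prod_mem[OF W closed]) (simp_all add: F_def X)
  also have "entrywise (\<lambda>x y. complex_of_real (\<Prod>p\<in>F. (w (fst p) (snd p))\<^sup>2 - (w x y)\<^sup>2)) X
      = C *\<^sub>R entrywise (\<lambda>x y. if (x, y) \<in> {(a, b), (b, a)} then 1 else 0) X"
  proof -
    have "(\<Prod>p\<in>F. (w (fst p) (snd p))\<^sup>2 - (w x y)\<^sup>2) = (if (x, y) \<in> {(a, b), (b, a)} then C else 0)"
      for x y
    proof (cases "(x, y) \<in> F")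
      case True
      then show ?thesis
        by (auto simp: F_def intro!: prod_zero bexI[of _ "(x, y)"])
    next
      case False
      then show ?thesis using sym by (auto simp: F_def C_def)
    qed
    then show ?thesis
      by (simp add: entrywise_def vec_eq_iff scaleR_conv_of_real[where 'a=complex])
  qed
  finally have "inverse C *\<^sub>R (C *\<^sub>R entrywise (\<lambda>x y. if (x, y) \<in> {(a, b), (b, a)} then 1 else 0) X) \<in> W"
    by (rule subspace_scale[OF W])
  then show ?thesis
    using \<open>C \<noteq> 0\<close> by simp
qed

definition offdiag_pair :: "'n::finite \<Rightarrow> 'n \<Rightarrow> complex \<Rightarrow> 'n cmat" where
  "offdiag_pair a b k = (\<chi> x y. if x = a \<and> y = b then k else if x = b \<and> y = a then cnj k else 0)"

lemma entrywise_restrict_hermitian: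
  assumes "hermitian K" "a \<noteq> b"
  shows "entrywise (\<lambda>x y. if (x, y) \<in> {(a, b), (b, a)} then 1 else 0) K = offdiag_pair a b (K $ a $ b)"
proof -
  have "K $ b $ a = cnj (K $ a $ b)"
    using assms(1) unfolding hermitian_def by blast
  then show ?thesis
    using assms(2) by (auto simp: entrywise_def offdiag_pair_def vec_eq_iff)
qed

lemma entrywise_offdiag_pair:
  assumes "a \<noteq> b"
  shows "entrywise (\<lambda>x y. \<i> * complex_of_real (lam y - lam x)) (offdiag_pair a b k)
    = (lam b - lam a) *\<^sub>R offdiag_pair a b (\<i> * k)"
  using assms
  by (auto simp: entrywise_def offdiag_pair_def vec_eq_iff scaleR_conv_of_real[where 'a=complex]
      algebra_simps)

lemma qbracket_offdiag_pair:
  assumes "a \<noteq> b"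
  shows "qbracket (offdiag_pair a b k) (offdiag_pair a b (\<i> * k))
    = (2 * (cmod k)\<^sup>2) *\<^sub>R Ekj (\<lambda>i. axis i 1) a b"
proof -
  have "qbracket (offdiag_pair a b k) (offdiag_pair a b (\<i> * k)) $ x $ y
      = complex_of_real (2 * (cmod k)\<^sup>2) * Ekj (\<lambda>i. axis i 1) a b $ x $ y" for x y
    using assms
    by (cases "x = a"; cases "x = b"; cases "y = a"; cases "y = b")
       (simp_all add: qbracket_def offdiag_pair_def Ekj_def axis_def matrix_matrix_mult_def
         if_distrib[of "\<lambda>u. u * _"] if_distrib[of "\<lambda>u. _ * u"] sum.delta sum.delta'
         complex_norm_square[symmetric] algebra_simps del: of_real_power cong: if_cong)
  then show ?thesis
    by (simp add: vec_eq_iff scaleR_conv_of_real[where 'a=complex])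
qed

lemma Ekj_axis_mem_lie_gen_real_diag:
  assumes "hermitian K" "a \<noteq> b" "K $ a $ b \<noteq> 0"
    and sep: "\<And>x y. (x, y) \<notin> {(a, b), (b, a)} \<Longrightarrow> (lam y - lam x)\<^sup>2 \<noteq> (lam b - lam a)\<^sup>2"
  shows "Ekj (\<lambda>i. axis i 1) a b \<in> lie_gen K (real_diag lam)"
proof -
  let ?W = "lie_gen K (real_diag lam)"
  have W: "subspace ?W"
    by (simp add: lie_gen_def)
  have ad: "entrywise (\<lambda>x y. \<i> * complex_of_real (lam y - lam x)) X \<in> ?W" if "X \<in> ?W" for X
    using qbracket_mem_lie_gen[OF that, of "real_diag lam"]
    by (simp add: qbracket_real_diag lie_gen_def span_base iter_brackets.gen2)
  define k where "k = K $ a $ b"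
  have pair: "offdiag_pair a b k \<in> ?W"
    unfolding k_def entrywise_restrict_hermitian[OF assms(1,2), symmetric]
    by (rule entrywise_restrict_pair_mem[OF W ad _ _ sep])
       (simp_all add: lie_gen_def span_base iter_brackets.gen1 power2_commute)
  have "lam b - lam a \<noteq> 0"
    using sep[of a a] \<open>a \<noteq> b\<close> by auto
  then have rotated_pair: "offdiag_pair a b (\<i> * k) \<in> ?W"
    using subspace_scale[OF W ad[OF pair], of "inverse (lam b - lam a)"]
    unfolding entrywise_offdiag_pair[OF \<open>a \<noteq> b\<close>] by simp
  have "(2 * (cmod k)\<^sup>2) *\<^sub>R Ekj (\<lambda>i. axis i 1) a b \<in> ?W"
    using qbracket_mem_lie_gen[OF pair rotated_pair] unfolding qbracket_offdiag_pair[OF \<open>a \<noteq> b\<close>] .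
  then have "inverse (2 * (cmod k)\<^sup>2) *\<^sub>R ((2 * (cmod k)\<^sup>2) *\<^sub>R Ekj (\<lambda>i. axis i 1) a b) \<in> ?W"
    by (rule subspace_scale[OF W])
  then show ?thesis
    using \<open>K $ a $ b \<noteq> 0\<close> by (simp add: k_def)
qed

definition cadjoint :: "'n::finite cmat \<Rightarrow> 'n cmat" where
  "cadjoint A = (\<chi> a b. cnj (A $ b $ a))"

lemma hermitian_iff_cadjoint: "hermitian A \<longleftrightarrow> cadjoint A = A"
  unfolding hermitian_def cadjoint_def vec_eq_iff vec_lambda_beta by metis

lemma cadjoint_cadjoint [simp]: "cadjoint (cadjoint A) = A"
  by (simp add: cadjoint_def vec_eq_iff)

lemma cadjoint_mult: "cadjoint (A ** B) = cadjoint B ** cadjoint A"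
  by (simp add: cadjoint_def vec_eq_iff matrix_matrix_mult_def mult.commute)

lemma hermitian_cadjoint_conj:
  assumes "hermitian H"
  shows "hermitian (cadjoint U ** H ** U)"
  using assms by (simp add: hermitian_iff_cadjoint cadjoint_mult matrix_mul_assoc)

lemma Ekj_matrix_vector_mult:
  "Ekj (\<lambda>i. U *v phi i) k j = U ** Ekj phi k j ** cadjoint U"
  by (simp add: Ekj_def cadjoint_def vec_eq_iff matrix_matrix_mult_def matrix_vector_mult_def
      sum_distrib_left sum_distrib_right sum_subtractf algebra_simps)

lemma lie_gen_conj:
  assumes "V ** U = mat 1" "X \<in> lie_gen K D"
  shows "U ** X ** V \<in> lie_gen (U ** K ** V) (U ** D ** V)"
  using lie_gen_hom_image[OF linear_sandwich qbracket_conj[OF assms(1)]] assms(2) by blast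

lemma distinct_gaps_sep:
  fixes lam :: "'a \<Rightarrow> real"
  assumes gaps: "\<And>k l k' l'. k \<noteq> l \<Longrightarrow> k' \<noteq> l' \<Longrightarrow> (k, l) \<noteq> (k', l') \<Longrightarrow>
                 lam k - lam l \<noteq> lam k' - lam l'"
    and "a \<noteq> b" "(x, y) \<notin> {(a, b), (b, a)}"
  shows "(lam y - lam x)\<^sup>2 \<noteq> (lam b - lam a)\<^sup>2"
proof (cases "x = y")
  case True
  then show ?thesis using gaps[of b a a b] \<open>a \<noteq> b\<close> by auto
next
  case False
  then show ?thesis
    using gaps[of y x b a] gaps[of y x a b] assms(2,3) by (auto simp: power2_eq_iff)
qed

definition column_matrix :: "('n::finite \<Rightarrow> complex ^ 'n) \<Rightarrow> 'n cmat" where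
  "column_matrix psi = (\<chi> x i. psi i $ x)"

lemma column_matrix_mult_axis: "column_matrix psi *v axis i 1 = psi i"
  by (simp add: column_matrix_def matrix_vector_mult_def axis_def vec_eq_iff
      if_distrib[of "\<lambda>u. _ * u"] cong: if_cong)

lemma cadjoint_column_matrix_conj_nth:
  "(cadjoint (column_matrix psi) ** H ** column_matrix psi) $ a $ b = cinner (H *v psi b) (psi a)"
  by (simp add: column_matrix_def cadjoint_def cinner_def matrix_matrix_mult_def
      matrix_vector_mult_def sum_distrib_left sum_distrib_right mult_ac)
     (rule sum.swap)

lemma cadjoint_column_matrix_mult_self:
  assumes "\<And>k j. cinner (psi k) (psi j) = (if k = j then 1 else 0)"
  shows "cadjoint (column_matrix psi) ** column_matrix psi = mat 1"
proof -
  have "(cadjoint (column_matrix psi) ** column_matrix psi) $ a $ b = mat 1 $ a $ b" for a b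
    using cadjoint_column_matrix_conj_nth[of psi "mat 1" a b] assms[of b a]
    by simp (simp add: mat_def)
  then show ?thesis
    by (simp add: vec_eq_iff)
qed

lemma cinner_smult_left: "cinner (c *s u) v = c * cinner u v"
  by (simp add: cinner_def sum_distrib_left mult.assoc)

lemma cadjoint_column_matrix_conj_eigen:
  assumes "\<And>k j. cinner (psi k) (psi j) = (if k = j then 1 else 0)"
    and "\<And>k. H *v psi k = complex_of_real (lam k) *s psi k"
  shows "cadjoint (column_matrix psi) ** H ** column_matrix psi = real_diag lam"
  by (simp add: vec_eq_iff cadjoint_column_matrix_conj_nth real_diag_def cinner_smult_left assms)

lemma unitary_conj_cancel:
  assumes "U ** cadjoint U = mat 1"
  shows "U ** (cadjoint U ** H ** U) ** cadjoint U = H"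
  by (metis assms matrix_mul_assoc matrix_mul_lid matrix_mul_rid)

theorem mainTheorem8:
  fixes H1 H2 :: "complex ^ 'n::finite ^ 'n"
    and psi :: "'n \<Rightarrow> complex ^ 'n"
    and lam :: "'n \<Rightarrow> real"
  assumes N: "CARD('n) > 1"
    and herm1: "hermitian H1"
    and herm2: "hermitian H2"
    and orthonormal: "\<And>k j. cinner (psi k) (psi j) = (if k = j then 1 else 0)"
    and eigen: "\<And>k. H2 *v psi k = complex_of_real (lam k) *s psi k"
    and coupling: "\<And>k j. k \<noteq> j \<Longrightarrow> cinner (H1 *v psi k) (psi j) \<noteq> 0"
    and gaps: "\<And>k l k' l'. k \<noteq> l \<Longrightarrow> k' \<noteq> l' \<Longrightarrow> (k, l) \<noteq> (k', l') \<Longrightarrow>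
                 lam k - lam l \<noteq> lam k' - lam l'"
  shows "\<forall>k j. k \<noteq> j \<longrightarrow> Ekj psi k j \<in> lie_gen H1 H2"
proof (intro allI impI)
  fix k j :: 'n
  assume "k \<noteq> j"
  define U where "U = column_matrix psi"
  have left_inverse: "cadjoint U ** U = mat 1"
    unfolding U_def using orthonormal by (rule cadjoint_column_matrix_mult_self)
  then have right_inverse: "U ** cadjoint U = mat 1"
    using matrix_left_right_inverse by blast
  have diag: "cadjoint U ** H2 ** U = real_diag lam"
    unfolding U_def using orthonormal eigen by (rule cadjoint_column_matrix_conj_eigen)
  have in_eigenbasis: "Ekj (\<lambda>i. axis i 1) k j \<in> lie_gen (cadjoint U ** H1 ** U) (cadjoint U ** H2 ** U)"
    unfolding diag using \<open>k \<noteq> j\<close> coupling[of j k] distinct_gaps_sep[OF gaps \<open>k \<noteq> j\<close>]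
    by (intro Ekj_axis_mem_lie_gen_real_diag)
       (simp_all add: hermitian_cadjoint_conj herm1 U_def cadjoint_column_matrix_conj_nth)
  have "U ** Ekj (\<lambda>i. axis i 1) k j ** cadjoint U \<in> lie_gen H1 H2"
    using lie_gen_conj[OF left_inverse in_eigenbasis] unfolding unitary_conj_cancel[OF right_inverse] .
  then show "Ekj psi k j \<in> lie_gen H1 H2"
    by (simp add: Ekj_matrix_vector_mult[symmetric] U_def column_matrix_mult_axis)
qed

end
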